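(* Let $\sigma_1=\sigma_x,\sigma_2=\sigma_y,\sigma_3=\sigma_z$ and, for $\underline{\lambda}\in\mathbb{R}^3$, $U_{\underline{\lambda}}=\exp\{-i\sum_{j=1}^3\lambda_j\,\sigma_j\otimes\sigma_j\}$. For a normalized two-qubit pure probe $|\psi_0\rangle$ let $Q$ be the quantum Fisher information matrix of the model $\underline{\lambda}\mapsto U_{\underline{\lambda}}|\psi_0\rangle$, let $p=\mathrm{Tr}[Q^{-1}]$ (precision; $p=+\infty$ if $Q$ is singular) and $s=1/\mathrm{Det}[Q]$ (sloppiness). Then for every probe and every $\underline{\lambda}$, $p\ge 3/4$ and $s\ge 1/64$ (i.e. $\mathrm{Det}[Q]\le 64$). Moreover, the following are equivalent for a probe $|\psi_0\rangle$: (i) $p=3/4$; (ii) $s=1/64$; (iii) up to a global phase, in the computational basis $\{|00\rangle,|01\rangle,|10\rangle,|11\rangle\}$, $$|\psi_0\rangle=\Big(\alpha,\ \beta e^{i\phi},\ \pm i\sqrt{\tfrac12-\beta^2}\,e^{i\phi},\ \pm i\sqrt{\tfrac12-\alpha^2}\Big)^T$$ for some $\alpha,\beta\in[0,1/\sqrt2]$, $\phi\in[0,2\pi)$ and independent choices of the two signs. In particular, both optimal values are attained simultaneously, and the optimal set contains product states such as $|0\rangle\otimes\tfrac{1}{\sqrt2}(|0\rangle+e^{i\phi}|1\rangle)$ as well as states of every concurrence in $[0,1]$.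
   Context: For a pure-state model $\underline{\lambda}\mapsto|\psi_{\underline{\lambda}}\rangle$, with $\partial_j=\partial/\partial\lambda_j$, the quantum Fisher information matrix is $Q_{jk}=4\,\mathrm{Re}\big[\langle\partial_j\psi|\partial_k\psi\rangle-\langle\partial_j\psi|\psi\rangle\langle\psi|\partial_k\psi\rangle\big]$. The concurrence of a pure state $\sum_{x,y\in\{0,1\}}a_{xy}|x\rangle|y\rangle$ is $2|a_{00}a_{11}-a_{01}a_{10}|$. *)

theory Defs
  imports "HOL-Analysis.Analysis"
begin

text \<open>Single-qubit states/operators are indexed by the type 2 (elements 0, 1);
  two-qubit ones by 2 \<times> 2, the index (x,y) standing for the basis ket |xy>.\<close>

type_synonym qstate = "complex ^ (2 \<times> 2)"
type_synonym qop = "complex ^ (2 \<times> 2) ^ (2 \<times> 2)"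

definition sigma_x :: "complex ^ 2 ^ 2" where
  "sigma_x = (\<chi> r c. if r \<noteq> c then 1 else 0)"

definition sigma_y :: "complex ^ 2 ^ 2" where
  "sigma_y = (\<chi> r c. if r = 0 \<and> c = 1 then - \<i> else if r = 1 \<and> c = 0 then \<i> else 0)"

definition sigma_z :: "complex ^ 2 ^ 2" where
  "sigma_z = (\<chi> r c. if r = c then (if r = 0 then 1 else -1) else 0)"

text \<open>Index j :: 3 with j = 1, 2, 3 (note 3 = 0 in type 3): sigma_1 = sigma_x, sigma_2 = sigma_y,
  sigma_3 = sigma_z.\<close>
definition pauli :: "3 \<Rightarrow> complex ^ 2 ^ 2" where
  "pauli j = (if j = 1 then sigma_x else if j = 2 then sigma_y else sigma_z)"

definition kron :: "complex ^ 2 ^ 2 \<Rightarrow> complex ^ 2 ^ 2 \<Rightarrow> qop" where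
  "kron A B = (\<chi> r c. A $ fst r $ fst c * B $ snd r $ snd c)"

fun mpow :: "qop \<Rightarrow> nat \<Rightarrow> qop" where
  "mpow A 0 = mat 1"
| "mpow A (Suc n) = A ** mpow A n"

definition mexp :: "qop \<Rightarrow> qop" where
  "mexp A = (\<Sum>n. (1 / fact n) *\<^sub>R mpow A n)"

definition U :: "real ^ 3 \<Rightarrow> qop" where
  "U lam = mexp (\<chi> r c. - \<i> * (\<Sum>j\<in>UNIV. complex_of_real (lam $ j) * kron (pauli j) (pauli j) $ r $ c))"

definition braket :: "qstate \<Rightarrow> qstate \<Rightarrow> complex" where
  "braket a b = (\<Sum>i\<in>UNIV. cnj (a $ i) * b $ i)"

definition normalized :: "qstate \<Rightarrow> bool" where
  "normalized v \<longleftrightarrow> braket v v = 1"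

definition psi :: "qstate \<Rightarrow> real ^ 3 \<Rightarrow> qstate" where
  "psi psi0 lam = U lam *v psi0"

definition dpsi :: "qstate \<Rightarrow> 3 \<Rightarrow> real ^ 3 \<Rightarrow> qstate" where
  "dpsi psi0 j lam = vector_derivative (\<lambda>t. psi psi0 (lam + t *\<^sub>R axis j 1)) (at 0)"

definition QFI :: "qstate \<Rightarrow> real ^ 3 \<Rightarrow> real ^ 3 ^ 3" where
  "QFI psi0 lam = (\<chi> j k. 4 * Re (braket (dpsi psi0 j lam) (dpsi psi0 k lam)
       - braket (dpsi psi0 j lam) (psi psi0 lam) * braket (psi psi0 lam) (dpsi psi0 k lam)))"

definition precision :: "qstate \<Rightarrow> real ^ 3 \<Rightarrow> ereal" where
  "precision psi0 lam = (if invertible (QFI psi0 lam)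
     then ereal (trace (matrix_inv (QFI psi0 lam))) else \<infinity>)"

definition sloppiness :: "qstate \<Rightarrow> real ^ 3 \<Rightarrow> ereal" where
  "sloppiness psi0 lam = (if det (QFI psi0 lam) = 0 then \<infinity>
     else ereal (1 / det (QFI psi0 lam)))"

definition ket :: "complex \<Rightarrow> complex \<Rightarrow> complex \<Rightarrow> complex \<Rightarrow> qstate" where
  "ket a00 a01 a10 a11 = (\<chi> i. if fst i = 0 then (if snd i = 0 then a00 else a01)
                                  else (if snd i = 0 then a10 else a11))"

definition concurrence :: "qstate \<Rightarrow> real" where
  "concurrence v = 2 * cmod (v $ (0,0) * v $ (1,1) - v $ (0,1) * v $ (1,0))"

definition optimal_form :: "qstate \<Rightarrow> bool" where
  "optimal_form v \<longleftrightarrow> (\<exists>c \<alpha> \<beta> \<phi> s1 s2. cmod c = 1 \<and>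
      0 \<le> \<alpha> \<and> \<alpha> \<le> 1 / sqrt 2 \<and> 0 \<le> \<beta> \<and> \<beta> \<le> 1 / sqrt 2 \<and>
      0 \<le> \<phi> \<and> \<phi> < 2 * pi \<and> s1 \<in> {1, -1} \<and> s2 \<in> {1, -1} \<and>
      v = c *s ket (complex_of_real \<alpha>)
                   (complex_of_real \<beta> * cis \<phi>)
                   (complex_of_real s1 * \<i> * complex_of_real (sqrt (1/2 - \<beta>\<^sup>2)) * cis \<phi>)
                   (complex_of_real s2 * \<i> * complex_of_real (sqrt (1/2 - \<alpha>\<^sup>2))))"

end

theory Submission
  imports Defs
begin

text \<open>Every sigma_j \<otimes> sigma_j is diagonal in the Bell basis with eigenvalues +-1, so U_lambda
  only multiplies the Bell coefficients of the probe by phases. Hence Q does not depend on lambda: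
  it is 4 times the covariance matrix of the eigenvalue vectors under the Bell weights
  q_k = |<B_k|psi0>|^2. For weights summing to 1, Det Q = 2^14 q_1 q_2 q_3 q_4 and
  Tr Q^-1 = 3 e_3(q) / (64 e_4(q)), so both bounds are AM-GM type inequalities for four
  probabilities, with equality exactly at q_k = 1/4. Uniform Bell weights say that the amplitude
  pairs (a_00, a_11) and (a_01, a_10) each have squared norm 1/2 and are orthogonal as vectors in
  R^2, which is the parametrisation (iii).\<close>

lemma exhaust_2_01: "(x::2) = 0 \<or> x = 1"
  using exhaust_2[of x] by auto

lemma UNIV_2x2: "(UNIV :: (2\<times>2) set) = {(0,0),(0,1),(1,0),(1,1)}"
  using exhaust_2_01 by auto

lemma sum_UNIV_2x2: "sum f (UNIV :: (2\<times>2) set) = f (0,0) + f (0,1) + f (1,0) + f (1,1)"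
  unfolding UNIV_2x2 by (simp add: ac_simps)

section \<open>The Bell basis\<close>

text \<open>The Bell states Phi+, Phi-, Psi+, Psi- have indices k = 1, ..., 4; bell_eigval j k is the
  eigenvalue of sigma_j \<otimes> sigma_j on the k-th one.\<close>

definition bell :: "4 \<Rightarrow> 2\<times>2 \<Rightarrow> real" where
  "bell k r = (if k = 1 then (if r = (0,0) \<or> r = (1,1) then 1 / sqrt 2 else 0)
     else if k = 2 then (if r = (0,0) then 1 / sqrt 2 else if r = (1,1) then - 1 / sqrt 2 else 0)
     else if k = 3 then (if r = (0,1) \<or> r = (1,0) then 1 / sqrt 2 else 0)
     else (if r = (0,1) then 1 / sqrt 2 else if r = (1,0) then - 1 / sqrt 2 else 0))"

definition bell_eigval :: "3 \<Rightarrow> 4 \<Rightarrow> real" where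
  "bell_eigval j k = (if j = 1 then (if k = 1 \<or> k = 3 then 1 else -1)
     else if j = 2 then (if k = 2 \<or> k = 3 then 1 else -1)
     else (if k = 1 \<or> k = 2 then 1 else -1))"

lemma inverse_sqrt_2_squared: "1 / sqrt 2 * (1 / sqrt 2) = (1/2::real)"
  by (simp add: divide_simps)

lemma bell_orthonormal: "(\<Sum>r\<in>UNIV. bell k r * bell l r) = (if k = l then 1 else 0)"
  unfolding sum_UNIV_2x2 bell_def
  using exhaust_4[of k] exhaust_4[of l]
  by (elim disjE) (simp_all add: inverse_sqrt_2_squared)

lemma bell_complete: "(\<Sum>k\<in>UNIV. bell k r * bell k s) = (if r = s then 1 else 0)"
proof -
  obtain a b c d where "r = (a,b)" "s = (c,d)" by fastforce
  then show ?thesis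
    unfolding sum_4 bell_def
    using exhaust_2_01[of a] exhaust_2_01[of b] exhaust_2_01[of c] exhaust_2_01[of d]
    by (elim disjE) (simp_all add: inverse_sqrt_2_squared)
qed

lemma kron_pauli_bell_expansion:
  "kron (pauli j) (pauli j) $ r $ s = (\<Sum>k\<in>UNIV. of_real (bell_eigval j k * bell k r * bell k s))"
proof -
  obtain a b c d where "r = (a,b)" "s = (c,d)" by fastforce
  then show ?thesis
    unfolding kron_def sum_4 bell_eigval_def bell_def pauli_def sigma_x_def sigma_y_def sigma_z_def
    using exhaust_3[of j] exhaust_2_01[of a] exhaust_2_01[of b] exhaust_2_01[of c] exhaust_2_01[of d]
    by (elim disjE) (simp_all add: inverse_sqrt_2_squared divide_simps)
qed

definition bell_diag :: "(4 \<Rightarrow> complex) \<Rightarrow> qop" where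
  "bell_diag f = (\<chi> r s. \<Sum>k\<in>UNIV. f k * of_real (bell k r * bell k s))"

lemma bell_diag_1: "bell_diag (\<lambda>_. 1) = mat 1"
proof -
  have "(\<Sum>k\<in>UNIV. 1 * of_real (bell k r * bell k s) :: complex) = (if r = s then 1 else 0)" for r s
    unfolding mult_1 of_real_sum[symmetric] bell_complete by simp
  then show ?thesis
    unfolding bell_diag_def mat_def vec_eq_iff vec_lambda_beta by simp
qed

lemma bell_diag_mult: "bell_diag f ** bell_diag g = bell_diag (\<lambda>k. f k * g k)"
proof -
  have "(\<Sum>t\<in>UNIV. (\<Sum>k\<in>UNIV. f k * of_real (bell k r * bell k t)) *
                   (\<Sum>l\<in>UNIV. g l * of_real (bell l t * bell l s)))
      = (\<Sum>k\<in>UNIV. f k * g k * of_real (bell k r * bell k s))" for r s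
  proof -
    have "(\<Sum>t\<in>UNIV. (\<Sum>k\<in>UNIV. f k * of_real (bell k r * bell k t)) *
                   (\<Sum>l\<in>UNIV. g l * of_real (bell l t * bell l s)))
        = (\<Sum>t\<in>UNIV. \<Sum>k\<in>UNIV. \<Sum>l\<in>UNIV.
             f k * g l * of_real (bell k r * bell l s) * of_real (bell k t * bell l t))"
      by (simp add: sum_product algebra_simps)
    also have "\<dots> = (\<Sum>k\<in>UNIV. \<Sum>l\<in>UNIV. \<Sum>t\<in>UNIV.
             f k * g l * of_real (bell k r * bell l s) * of_real (bell k t * bell l t))"
      by (subst sum.swap) (rule sum.cong[OF refl], rule sum.swap)
    also have "\<dots> = (\<Sum>k\<in>UNIV. \<Sum>l\<in>UNIV.
             f k * g l * of_real (bell k r * bell l s) * of_real (\<Sum>t\<in>UNIV. bell k t * bell l t))"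
      by (simp only: of_real_sum sum_distrib_left)
    also have "\<dots> = (\<Sum>k\<in>UNIV. f k * g k * of_real (bell k r * bell k s))"
      unfolding bell_orthonormal by (simp add: if_distrib cong: if_cong)
    finally show ?thesis .
  qed
  then show ?thesis
    by (simp add: vec_eq_iff matrix_matrix_mult_def bell_diag_def)
qed

lemma mpow_bell_diag: "mpow (bell_diag f) n = bell_diag (\<lambda>k. f k ^ n)"
  by (induction n) (simp_all add: bell_diag_1 bell_diag_mult)

lemma sums_vecI: "(\<And>i. (\<lambda>n. f n $ i) sums (l $ i)) \<Longrightarrow> f sums l"
  unfolding sums_def by (rule vec_tendstoI) simp

lemma mexp_bell_diag: "mexp (bell_diag f) = bell_diag (\<lambda>k. exp (f k))"
proof -
  have "(\<lambda>n. (1 / fact n) *\<^sub>R mpow (bell_diag f) n) sums bell_diag (\<lambda>k. exp (f k))"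
  proof (intro sums_vecI)
    fix r s
    have "(\<lambda>n. \<Sum>k\<in>UNIV. (f k ^ n /\<^sub>R fact n) * of_real (bell k r * bell k s))
        sums (\<Sum>k\<in>UNIV. exp (f k) * of_real (bell k r * bell k s))"
      by (intro sums_sum sums_mult2 exp_converges)
    moreover have "((1 / fact n) *\<^sub>R mpow (bell_diag f) n) $ r $ s
        = (\<Sum>k\<in>UNIV. (f k ^ n /\<^sub>R fact n) * of_real (bell k r * bell k s))" for n
      unfolding mpow_bell_diag
      by (simp only: vector_scaleR_component bell_diag_def vec_lambda_beta)
        (simp add: scaleR_sum_right scaleR_conv_of_real divide_inverse mult_ac sum_distrib_left)
    ultimately show "(\<lambda>n. ((1 / fact n) *\<^sub>R mpow (bell_diag f) n) $ r $ s)
        sums bell_diag (\<lambda>k. exp (f k)) $ r $ s"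
      by (simp add: bell_diag_def)
  qed
  then show ?thesis
    unfolding mexp_def by (simp add: sums_iff)
qed

definition bell_phase :: "real ^ 3 \<Rightarrow> 4 \<Rightarrow> complex" where
  "bell_phase lam k = - \<i> * of_real (\<Sum>j\<in>UNIV. lam $ j * bell_eigval j k)"

lemma U_eq_bell_diag: "U lam = bell_diag (\<lambda>k. exp (bell_phase lam k))"
proof -
  have "- \<i> * (\<Sum>j\<in>UNIV. of_real (lam $ j) * kron (pauli j) (pauli j) $ r $ s)
      = (\<Sum>k\<in>UNIV. bell_phase lam k * of_real (bell k r * bell k s))" for r s
  proof -
    have "(\<Sum>j\<in>UNIV. of_real (lam $ j) * kron (pauli j) (pauli j) $ r $ s)
        = (\<Sum>k\<in>UNIV. \<Sum>j\<in>UNIV. of_real (lam $ j) * of_real (bell_eigval j k * bell k r * bell k s))"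
      unfolding kron_pauli_bell_expansion sum_distrib_left by (rule sum.swap)
    also have "\<dots> = (\<Sum>k\<in>UNIV. of_real (\<Sum>j\<in>UNIV. lam $ j * bell_eigval j k) * of_real (bell k r * bell k s))"
      by (simp add: of_real_sum sum_distrib_right mult.assoc)
    finally have "- \<i> * (\<Sum>j\<in>UNIV. of_real (lam $ j) * kron (pauli j) (pauli j) $ r $ s)
        = - \<i> * (\<Sum>k\<in>UNIV. of_real (\<Sum>j\<in>UNIV. lam $ j * bell_eigval j k) * of_real (bell k r * bell k s))"
      by (rule arg_cong)
    then show ?thesis
      by (simp only: bell_phase_def sum_distrib_left mult.assoc)
  qed
  then have "U lam = mexp (bell_diag (bell_phase lam))"
    unfolding U_def bell_diag_def by (simp only:)
  then show ?thesis
    by (simp add: mexp_bell_diag)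
qed

section \<open>Bell coefficients and the quantum Fisher information\<close>

definition bell_vec :: "4 \<Rightarrow> qstate" where
  "bell_vec k = (\<chi> r. of_real (bell k r))"

definition bell_coeff :: "qstate \<Rightarrow> 4 \<Rightarrow> complex" where
  "bell_coeff v k = braket (bell_vec k) v"

lemma bell_diag_mult_vec: "bell_diag f *v v = (\<Sum>k\<in>UNIV. (f k * bell_coeff v k) *s bell_vec k)"
proof -
  have "(\<Sum>s\<in>UNIV. (\<Sum>k\<in>UNIV. f k * of_real (bell k r * bell k s)) * v $ s)
      = (\<Sum>k\<in>UNIV. f k * bell_coeff v k * of_real (bell k r))" for r
  proof -
    have "(\<Sum>s\<in>UNIV. (\<Sum>k\<in>UNIV. f k * of_real (bell k r * bell k s)) * v $ s)
        = (\<Sum>s\<in>UNIV. \<Sum>k\<in>UNIV. f k * of_real (bell k r) * (of_real (bell k s) * v $ s))"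
      by (simp add: sum_distrib_right sum_distrib_left mult_ac)
    also have "\<dots> = (\<Sum>k\<in>UNIV. \<Sum>s\<in>UNIV. f k * of_real (bell k r) * (of_real (bell k s) * v $ s))"
      by (rule sum.swap)
    also have "\<dots> = (\<Sum>k\<in>UNIV. f k * bell_coeff v k * of_real (bell k r))"
      by (simp add: bell_coeff_def braket_def bell_vec_def sum_distrib_left mult_ac)
    finally show ?thesis .
  qed
  then show ?thesis
    by (simp add: vec_eq_iff matrix_vector_mult_def bell_diag_def bell_vec_def)
qed

lemma bell_expansion: "v = (\<Sum>k\<in>UNIV. bell_coeff v k *s bell_vec k)"
  using bell_diag_mult_vec[of "\<lambda>_. 1" v] by (simp add: bell_diag_1)

lemma braket_bell_expansions:
  "braket (\<Sum>k\<in>UNIV. a k *s bell_vec k) (\<Sum>k\<in>UNIV. b k *s bell_vec k) = (\<Sum>k\<in>UNIV. cnj (a k) * b k)"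
proof -
  have "braket (\<Sum>k\<in>UNIV. a k *s bell_vec k) (\<Sum>k\<in>UNIV. b k *s bell_vec k)
      = (\<Sum>r\<in>UNIV. \<Sum>k\<in>UNIV. \<Sum>l\<in>UNIV. cnj (a k) * b l * of_real (bell k r * bell l r))"
    by (simp add: braket_def bell_vec_def cnj_sum, simp only: sum_distrib_right,
        simp only: sum_distrib_left, simp add: mult_ac)
  also have "\<dots> = (\<Sum>k\<in>UNIV. \<Sum>l\<in>UNIV. \<Sum>r\<in>UNIV. cnj (a k) * b l * of_real (bell k r * bell l r))"
    by (subst sum.swap) (rule sum.cong[OF refl], rule sum.swap)
  also have "\<dots> = (\<Sum>k\<in>UNIV. \<Sum>l\<in>UNIV. cnj (a k) * b l * of_real (\<Sum>r\<in>UNIV. bell k r * bell l r))"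
    by (simp only: of_real_sum sum_distrib_left)
  also have "\<dots> = (\<Sum>k\<in>UNIV. cnj (a k) * b k)"
    unfolding bell_orthonormal by (simp add: if_distrib cong: if_cong)
  finally show ?thesis .
qed

lemma psi_bell_expansion:
  "psi psi0 lam = (\<Sum>k\<in>UNIV. (exp (bell_phase lam k) * bell_coeff psi0 k) *s bell_vec k)"
  unfolding psi_def U_eq_bell_diag bell_diag_mult_vec ..

lemma bell_phase_shift:
  "bell_phase (lam + t *\<^sub>R axis j 1) k = bell_phase lam k + (- \<i> * of_real (bell_eigval j k)) * of_real t"
proof -
  have "(lam + t *\<^sub>R axis j 1) $ i * bell_eigval i k
      = lam $ i * bell_eigval i k + t * (if i = j then bell_eigval i k else 0)" for i
    by (simp add: axis_def algebra_simps)
  then have "(\<Sum>i\<in>UNIV. (lam + t *\<^sub>R axis j 1) $ i * bell_eigval i k)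
      = (\<Sum>i\<in>UNIV. lam $ i * bell_eigval i k) + t * bell_eigval j k"
    by (simp only: sum.distrib sum_distrib_left[symmetric]) simp
  then show ?thesis
    by (simp add: bell_phase_def algebra_simps)
qed

lemma bounded_linear_scalar_mult_vec: "bounded_linear (\<lambda>c::complex. c *s (v :: complex ^ 'n))"
  unfolding linear_conv_bounded_linear[symmetric]
  by (rule linearI) (simp_all add: vec_eq_iff algebra_simps)

lemma has_vector_derivative_exp_affine:
  fixes a b z :: complex
  shows "((\<lambda>t::real. exp (a + b * of_real t) * z) has_vector_derivative (exp a * b * z)) (at 0)"
proof -
  have "((\<lambda>w. exp (a + b * w) * z) has_field_derivative (exp (a + b * 0) * b * z)) (at (of_real 0))"
    by (auto intro!: derivative_eq_intros)
  then show ?thesis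
    using has_vector_derivative_real_field by fastforce
qed

lemma dpsi_bell_expansion:
  "dpsi psi0 j lam = (\<Sum>k\<in>UNIV.
     (- \<i> * of_real (bell_eigval j k) * (exp (bell_phase lam k) * bell_coeff psi0 k)) *s bell_vec k)"
proof -
  have "((\<lambda>t. psi psi0 (lam + t *\<^sub>R axis j 1)) has_vector_derivative
     (\<Sum>k\<in>UNIV. (exp (bell_phase lam k) * (- \<i> * of_real (bell_eigval j k)) * bell_coeff psi0 k) *s bell_vec k))
     (at 0)"
    unfolding psi_bell_expansion bell_phase_shift
    by (intro has_vector_derivative_sum bounded_linear.has_vector_derivative[OF bounded_linear_scalar_mult_vec]
          has_vector_derivative_exp_affine)
  then show ?thesis
    unfolding dpsi_def by (subst vector_derivative_at) (simp_all add: mult_ac)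
qed

definition bell_weight :: "qstate \<Rightarrow> 4 \<Rightarrow> real" where
  "bell_weight v k = (cmod (bell_coeff v k))\<^sup>2"

lemma cnj_bell_coeff_mult_self: "cnj (bell_coeff v k) * bell_coeff v k = of_real (bell_weight v k)"
  unfolding bell_weight_def complex_norm_square by (rule mult.commute)

lemma sum_bell_weight: "normalized v \<Longrightarrow> (\<Sum>k\<in>UNIV. bell_weight v k) = 1"
  using braket_bell_expansions[of "bell_coeff v" "bell_coeff v"]
  unfolding normalized_def bell_expansion[symmetric] cnj_bell_coeff_mult_self
  by (metis of_real_sum of_real_eq_1_iff)

definition bell_QFI :: "(4 \<Rightarrow> real) \<Rightarrow> real ^ 3 ^ 3" where
  "bell_QFI q = (\<chi> j l. 4 * ((\<Sum>k\<in>UNIV. bell_eigval j k * bell_eigval l k * q k)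
     - (\<Sum>k\<in>UNIV. bell_eigval j k * q k) * (\<Sum>k\<in>UNIV. bell_eigval l k * q k)))"

lemma QFI_eq_bell_QFI: "QFI psi0 lam = bell_QFI (bell_weight psi0)"
proof -
  \<comment> \<open>The phases exp (bell_phase lam k) have modulus 1 and drop out.\<close>
  define c where "c k = exp (bell_phase lam k) * bell_coeff psi0 k" for k
  define e where "e j k = - \<i> * of_real (bell_eigval j k)" for j k
  have "cnj (exp (bell_phase lam k)) * exp (bell_phase lam k) = 1" for k
    by (simp add: exp_cnj exp_add[symmetric] bell_phase_def)
  then have c_weight: "cnj (c k) * c k = of_real (bell_weight psi0 k)" for k
    using cnj_bell_coeff_mult_self[of psi0 k] by (simp add: c_def mult_ac)
  have psi: "psi psi0 lam = (\<Sum>k\<in>UNIV. c k *s bell_vec k)"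
    and dpsi: "dpsi psi0 j lam = (\<Sum>k\<in>UNIV. (e j k * c k) *s bell_vec k)" for j
    unfolding c_def e_def psi_bell_expansion dpsi_bell_expansion by simp_all
  have "cnj (e j k * c k) * (e l k * c k) = of_real (bell_eigval j k * bell_eigval l k * bell_weight psi0 k)"
    and "cnj (e j k * c k) * c k = \<i> * of_real (bell_eigval j k * bell_weight psi0 k)"
    and "cnj (c k) * (e l k * c k) = - \<i> * of_real (bell_eigval l k * bell_weight psi0 k)" for j l k
    using c_weight[of k] by (simp_all add: e_def algebra_simps)
  then show ?thesis
    unfolding QFI_def bell_QFI_def psi dpsi braket_bell_expansions
    by (simp add: vec_eq_iff of_real_sum[symmetric] sum_distrib_left[symmetric] sum_negf)
qed

section \<open>Inequalities for four weights\<close>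

lemma
  fixes x y :: "'a::linordered_field"
  shows mult_le_square_mean: "x * y \<le> ((x + y) / 2)\<^sup>2"
    and mult_eq_square_mean_iff: "x * y = ((x + y) / 2)\<^sup>2 \<longleftrightarrow> x = y"
proof -
  have "((x + y) / 2)\<^sup>2 - x * y = ((x - y) / 2)\<^sup>2"
    by (simp add: power2_eq_square field_simps)
  moreover have "0 \<le> ((x - y) / 2)\<^sup>2" and "((x - y) / 2)\<^sup>2 = 0 \<longleftrightarrow> x = y"
    by simp_all
  ultimately show "x * y \<le> ((x + y) / 2)\<^sup>2" "x * y = ((x + y) / 2)\<^sup>2 \<longleftrightarrow> x = y"
    by linarith+
qed

lemma mult_eq_mult_bounds:
  fixes x y X Y :: "'a::linordered_field"
  assumes "0 \<le> x" "x \<le> X" "0 \<le> y" "y \<le> Y" and eq: "x * y = X * Y" and pos: "0 < X * Y"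
  shows "x = X" and "y = Y"
proof -
  have "0 < X" "0 < Y"
    using pos assms(1,2) by (auto simp: zero_less_mult_iff)
  have "x * y \<le> x * Y" "x * Y \<le> X * Y"
    using assms(1-4) by (simp_all add: mult_left_mono mult_right_mono)
  then have "x * Y = X * Y" "x * y = x * Y"
    using eq by linarith+
  moreover from this have "0 < x"
    using pos \<open>0 < Y\<close> assms(1) by (auto simp: zero_less_mult_iff)
  ultimately show "x = X" "y = Y"
    using \<open>0 < Y\<close> by simp_all
qed

lemma prod_four_le:
  fixes a b c d :: real
  assumes nonneg: "0 \<le> a" "0 \<le> b" "0 \<le> c" "0 \<le> d" and sum: "a + b + c + d = 1"
  shows "a * b * c * d \<le> 1/256"
    and "a * b * c * d = 1/256 \<longleftrightarrow> a = 1/4 \<and> b = 1/4 \<and> c = 1/4 \<and> d = 1/4"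
proof -
  define s t where "s = a + b" and "t = c + d"
  have ab: "a * b \<le> (s / 2)\<^sup>2" and cd: "c * d \<le> (t / 2)\<^sup>2" and st: "s * t \<le> ((s + t) / 2)\<^sup>2"
    unfolding s_def t_def by (rule mult_le_square_mean)+
  have "s + t = 1" "0 \<le> s * t"
    using sum nonneg by (simp_all add: s_def t_def)
  then have "(s * t)\<^sup>2 \<le> (1/4)\<^sup>2"
    using st by (intro power_mono) (simp_all add: power2_eq_square)
  then have bound: "(s / 2)\<^sup>2 * (t / 2)\<^sup>2 \<le> 1/256"
    by (simp add: power2_eq_square mult_ac)
  have "a * b * (c * d) \<le> (s / 2)\<^sup>2 * (t / 2)\<^sup>2"
    using ab cd nonneg by (intro mult_mono) simp_all
  then show le: "a * b * c * d \<le> 1/256"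
    using bound by (simp add: mult.assoc)
  show "a * b * c * d = 1/256 \<longleftrightarrow> a = 1/4 \<and> b = 1/4 \<and> c = 1/4 \<and> d = 1/4"
  proof
    assume "a * b * c * d = 1/256"
    then have eq: "a * b * (c * d) = (s / 2)\<^sup>2 * (t / 2)\<^sup>2" and "(s / 2)\<^sup>2 * (t / 2)\<^sup>2 = 1/256"
      using \<open>a * b * (c * d) \<le> (s / 2)\<^sup>2 * (t / 2)\<^sup>2\<close> bound by (simp_all add: mult.assoc)
    moreover have "0 \<le> a * b" "0 \<le> c * d"
      using nonneg by simp_all
    ultimately have "a * b = (s / 2)\<^sup>2" "c * d = (t / 2)\<^sup>2"
      using mult_eq_mult_bounds[OF _ ab _ cd eq] by simp_all
    moreover have "(s * t)\<^sup>2 = (1/4)\<^sup>2"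
      using \<open>(s / 2)\<^sup>2 * (t / 2)\<^sup>2 = 1/256\<close> by (simp add: power2_eq_square mult_ac)
    then have "s * t = 1/4"
      using \<open>0 \<le> s * t\<close> by (subst (asm) power2_eq_iff_nonneg) simp_all
    then have "s * t = ((s + t) / 2)\<^sup>2"
      using \<open>s + t = 1\<close> by (simp add: power_divide)
    ultimately have "a = b" "c = d" "s = t"
      unfolding s_def t_def mult_eq_square_mean_iff by simp_all
    then show "a = 1/4 \<and> b = 1/4 \<and> c = 1/4 \<and> d = 1/4"
      using \<open>s + t = 1\<close> by (simp add: s_def t_def)
  qed (simp del: divide_const_simps)
qed

lemma triple_prods_ge_prod_four:
  fixes a b c d :: real
  assumes pos: "0 < a" "0 < b" "0 < c" "0 < d" and sum: "a + b + c + d = 1"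
  shows "16 * (a * b * c * d) \<le> a * b * c + a * b * d + a * c * d + b * c * d"
    and "16 * (a * b * c * d) = a * b * c + a * b * d + a * c * d + b * c * d
           \<longleftrightarrow> a = 1/4 \<and> b = 1/4 \<and> c = 1/4 \<and> d = 1/4"
proof -
  have d: "d = 1 - a - b - c"
    using sum by simp
  have sos: "a * b * c + a * b * d + a * c * d + b * c * d - 16 * (a * b * c * d)
     = (4*a - 1)\<^sup>2 * (b * c * d) + (4*b - 1)\<^sup>2 * (a * c * d) + (4*c - 1)\<^sup>2 * (a * b * d)
       + (4*d - 1)\<^sup>2 * (a * b * c)"
    unfolding d by (simp add: power2_eq_square algebra_simps)
  have nonneg: "0 \<le> (4*a - 1)\<^sup>2 * (b * c * d)" "0 \<le> (4*b - 1)\<^sup>2 * (a * c * d)"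
      "0 \<le> (4*c - 1)\<^sup>2 * (a * b * d)" "0 \<le> (4*d - 1)\<^sup>2 * (a * b * c)"
    using pos by simp_all
  then show "16 * (a * b * c * d) \<le> a * b * c + a * b * d + a * c * d + b * c * d"
    using sos by linarith
  show "16 * (a * b * c * d) = a * b * c + a * b * d + a * c * d + b * c * d
           \<longleftrightarrow> a = 1/4 \<and> b = 1/4 \<and> c = 1/4 \<and> d = 1/4"
  proof
    assume "16 * (a * b * c * d) = a * b * c + a * b * d + a * c * d + b * c * d"
    then have "(4*a - 1)\<^sup>2 * (b * c * d) = 0" "(4*b - 1)\<^sup>2 * (a * c * d) = 0"
      "(4*c - 1)\<^sup>2 * (a * b * d) = 0" "(4*d - 1)\<^sup>2 * (a * b * c) = 0"
      using sos nonneg by linarith+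
    then show "a = 1/4 \<and> b = 1/4 \<and> c = 1/4 \<and> d = 1/4"
      using pos by simp
  qed (simp del: divide_const_simps)
qed

lemma matrix_inv_unique:
  fixes A B :: "'a::comm_ring_1 ^ 'n ^ 'n"
  assumes "A ** B = mat 1" "B ** A = mat 1"
  shows "matrix_inv A = B"
  unfolding matrix_inv_def
proof (rule some_equality)
  fix B' assume "A ** B' = mat 1 \<and> B' ** A = mat 1"
  then show "B' = B"
    using assms by (metis matrix_mul_assoc matrix_mul_lid matrix_mul_rid)
qed (use assms in simp)

text \<open>The cofactor formula, with indices taken cyclically in the type 3.\<close>
definition adjugate3 :: "'a::comm_ring_1 ^ 3 ^ 3 \<Rightarrow> 'a ^ 3 ^ 3" where
  "adjugate3 A = (\<chi> i j. A$(j+1)$(i+1) * A$(j+2)$(i+2) - A$(j+1)$(i+2) * A$(j+2)$(i+1))"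

lemma numeral_mod_3_simps:
  "(1::3) + 1 = 2" "(2::3) + 1 = 3" "(3::3) + 1 = 1" "(1::3) + 2 = 3" "(2::3) + 2 = 1" "(3::3) + 2 = 2"
  "(4::3) = 1" "(5::3) = 2"
  by simp_all

lemma matrix_mul_adjugate3: "A ** adjugate3 A = mat (det A)"
  and adjugate3_matrix_mul: "adjugate3 A ** A = mat (det A)"
  unfolding vec_eq_iff forall_3 matrix_matrix_mult_def adjugate3_def mat_def
  by (simp_all add: sum_3 det_3 numeral_mod_3_simps algebra_simps)

lemma matrix_inv_3:
  fixes A :: "'a::field ^ 3 ^ 3"
  assumes "det A \<noteq> 0"
  shows "matrix_inv A = (\<chi> i j. adjugate3 A $ i $ j / det A)"
proof (rule matrix_inv_unique)
  have "(\<Sum>k\<in>UNIV. A $ i $ k * adjugate3 A $ k $ j) = (if i = j then det A else 0)"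
    and "(\<Sum>k\<in>UNIV. adjugate3 A $ i $ k * A $ k $ j) = (if i = j then det A else 0)" for i j
    using arg_cong[OF matrix_mul_adjugate3[of A], of "\<lambda>M. M $ i $ j"]
      arg_cong[OF adjugate3_matrix_mul[of A], of "\<lambda>M. M $ i $ j"]
    by (simp_all add: matrix_matrix_mult_def mat_def)
  then have "(\<Sum>k\<in>UNIV. A $ i $ k * (adjugate3 A $ k $ j / det A)) = (if i = j then 1 else 0)"
    and "(\<Sum>k\<in>UNIV. adjugate3 A $ i $ k / det A * A $ k $ j) = (if i = j then 1 else 0)" for i j
    using assms by (simp_all add: sum_divide_distrib[symmetric] times_divide_eq_right times_divide_eq_left)
  then show "A ** (\<chi> i j. adjugate3 A $ i $ j / det A) = mat 1"
    and "(\<chi> i j. adjugate3 A $ i $ j / det A) ** A = mat 1"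
    by (simp_all add: vec_eq_iff matrix_matrix_mult_def mat_def)
qed

lemma trace_matrix_inv_3:
  fixes A :: "'a::field ^ 3 ^ 3"
  assumes "det A \<noteq> 0"
  shows "trace (matrix_inv A) = trace (adjugate3 A) / det A"
  unfolding matrix_inv_3[OF assms] trace_def by (simp add: sum_divide_distrib)

lemma det_bell_QFI:
  assumes "(\<Sum>k\<in>UNIV. q k) = 1"
  shows "det (bell_QFI q) = 16384 * (q 1 * q 2 * q 3 * q 4)"
proof -
  have q4: "q 4 = 1 - q 1 - q 2 - q 3"
    using assms by (simp add: sum_4)
  show ?thesis
    unfolding det_3 bell_QFI_def vec_lambda_beta sum_4 bell_eigval_def q4
    by simp algebra
qed

lemma trace_adjugate3_bell_QFI:
  assumes "(\<Sum>k\<in>UNIV. q k) = 1"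
  shows "trace (adjugate3 (bell_QFI q))
    = 768 * (q 1 * q 2 * q 3 + q 1 * q 2 * q 4 + q 1 * q 3 * q 4 + q 2 * q 3 * q 4)"
proof -
  have q4: "q 4 = 1 - q 1 - q 2 - q 3"
    using assms by (simp add: sum_4)
  show ?thesis
    unfolding trace_def sum_3 adjugate3_def bell_QFI_def vec_lambda_beta sum_4 bell_eigval_def q4
    by (simp add: numeral_mod_3_simps algebra_simps)
qed

lemma det_bell_QFI_le:
  assumes nonneg: "\<And>k. 0 \<le> q k" and sum: "(\<Sum>k\<in>UNIV. q k) = 1"
  shows "det (bell_QFI q) \<le> 64"
    and "det (bell_QFI q) = 64 \<longleftrightarrow> (\<forall>k. q k = 1/4)"
proof -
  have "q 1 + q 2 + q 3 + q 4 = 1"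
    using sum by (simp add: sum_4)
  note prod = prod_four_le[OF nonneg nonneg nonneg nonneg this]
  show "det (bell_QFI q) \<le> 64" "det (bell_QFI q) = 64 \<longleftrightarrow> (\<forall>k. q k = 1/4)"
    using prod unfolding det_bell_QFI[OF sum] forall_4 by (simp_all add: mult_ac)
qed

lemma trace_inv_bell_QFI_ge:
  assumes nonneg: "\<And>k. 0 \<le> q k" and sum: "(\<Sum>k\<in>UNIV. q k) = 1"
    and det: "det (bell_QFI q) \<noteq> 0"
  shows "3/4 \<le> trace (matrix_inv (bell_QFI q))"
    and "trace (matrix_inv (bell_QFI q)) = 3/4 \<longleftrightarrow> (\<forall>k. q k = 1/4)"
proof -
  have "q 1 * q 2 * q 3 * q 4 \<noteq> 0"
    using det unfolding det_bell_QFI[OF sum] by simp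
  then have pos: "0 < q 1" "0 < q 2" "0 < q 3" "0 < q 4"
    using nonneg by (auto simp: less_le)
  have "q 1 + q 2 + q 3 + q 4 = 1"
    using sum by (simp add: sum_4)
  note triple = triple_prods_ge_prod_four[OF pos this]
  define P where "P = q 1 * q 2 * q 3 * q 4"
  define E where "E = q 1 * q 2 * q 3 + q 1 * q 2 * q 4 + q 1 * q 3 * q 4 + q 2 * q 3 * q 4"
  have "0 < P"
    using pos by (simp add: P_def)
  have "trace (matrix_inv (bell_QFI q)) = 3 * E / (64 * P)"
    unfolding trace_matrix_inv_3[OF det] trace_adjugate3_bell_QFI[OF sum] det_bell_QFI[OF sum] P_def E_def
    by (simp add: divide_simps)
  moreover have "3/4 \<le> 3 * E / (64 * P) \<longleftrightarrow> 16 * P \<le> E" "3 * E / (64 * P) = 3/4 \<longleftrightarrow> 16 * P = E"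
    using \<open>0 < P\<close> by (auto simp: field_simps)
  ultimately show "3/4 \<le> trace (matrix_inv (bell_QFI q))"
    and "trace (matrix_inv (bell_QFI q)) = 3/4 \<longleftrightarrow> (\<forall>k. q k = 1/4)"
    using triple unfolding forall_4 P_def E_def by simp_all
qed

lemma ereal_quotients_of_numerals: "(3/4::ereal) = ereal (3/4)" "(1/64::ereal) = ereal (1/64)"
  by (simp_all add: one_ereal_def)

definition uniform_bell_weights :: "qstate \<Rightarrow> bool" where
  "uniform_bell_weights v \<longleftrightarrow> (\<forall>k. bell_weight v k = 1/4)"

lemma
  assumes "normalized psi0"
  shows det_QFI_le: "det (QFI psi0 lam) \<le> 64"
    and det_QFI_eq_64_iff: "det (QFI psi0 lam) = 64 \<longleftrightarrow> uniform_bell_weights psi0"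
  unfolding QFI_eq_bell_QFI uniform_bell_weights_def
  using det_bell_QFI_le[of "bell_weight psi0", OF _ sum_bell_weight[OF assms]]
  by (simp_all add: bell_weight_def)

lemma
  assumes "normalized psi0"
  shows precision_ge: "3/4 \<le> precision psi0 lam"
    and precision_eq_iff: "precision psi0 lam = 3/4 \<longleftrightarrow> uniform_bell_weights psi0"
proof -
  note trace = trace_inv_bell_QFI_ge[of "bell_weight psi0", OF _ sum_bell_weight[OF assms]]
  have "3/4 \<le> precision psi0 lam \<and> (precision psi0 lam = 3/4 \<longleftrightarrow> uniform_bell_weights psi0)"
  proof (cases "det (QFI psi0 lam) = 0")
    case True
    then show ?thesis
      using det_QFI_eq_64_iff[OF assms, of lam] by (simp add: precision_def invertible_det_nz)
  next
    case False
    then show ?thesis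
      using trace False
      unfolding precision_def ereal_quotients_of_numerals QFI_eq_bell_QFI
      by (simp add: invertible_det_nz uniform_bell_weights_def bell_weight_def)
  qed
  then show "3/4 \<le> precision psi0 lam" "precision psi0 lam = 3/4 \<longleftrightarrow> uniform_bell_weights psi0"
    by simp_all
qed

lemma
  assumes "normalized psi0"
  shows sloppiness_ge: "1/64 \<le> sloppiness psi0 lam"
    and sloppiness_eq_iff: "sloppiness psi0 lam = 1/64 \<longleftrightarrow> uniform_bell_weights psi0"
proof -
  have "0 \<le> det (QFI psi0 lam)"
    unfolding QFI_eq_bell_QFI det_bell_QFI[OF sum_bell_weight[OF assms]] by (simp add: bell_weight_def)
  then show "1/64 \<le> sloppiness psi0 lam" "sloppiness psi0 lam = 1/64 \<longleftrightarrow> uniform_bell_weights psi0"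
    using det_QFI_le[OF assms, of lam] det_QFI_eq_64_iff[OF assms, of lam]
    unfolding sloppiness_def ereal_quotients_of_numerals by (auto simp: field_simps)
qed

section \<open>The optimal probes\<close>

lemma unit_complex_eq_cis_Arg2pi: "cmod w = 1 \<Longrightarrow> w = cis (Arg2pi w)"
  by (simp add: cis_conv_exp complex_norm_eq_1_exp)

lemma cnj_mult_self_unit: "cmod w = 1 \<Longrightarrow> cnj w * w = 1"
  using complex_norm_square[of w] by (simp add: mult.commute)

lemma orthogonal_pair_phase:
  assumes orth: "Re (x * cnj y) = 0" and nonzero: "x \<noteq> 0 \<or> y \<noteq> 0"
  obtains w where "cmod w = 1" "x = of_real (cmod x) * w" "Re (y * cnj w) = 0"
proof (cases "x = 0")
  case True
  then have "y \<noteq> 0"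
    using nonzero by simp
  then show ?thesis
    using True by (intro that[of "- \<i> * sgn y"]) (simp_all add: norm_mult sgn_div_norm)
next
  case False
  have "Re (y * cnj (sgn x)) = Re (y * cnj x) / cmod x"
    by (simp add: Re_sgn Im_sgn add_divide_distrib)
  also have "Re (y * cnj x) = Re (x * cnj y)"
    by (simp add: algebra_simps)
  finally have "Re (y * cnj (sgn x)) = 0"
    using orth by simp
  moreover have "cmod (sgn x) = 1"
    using False by (simp add: norm_sgn)
  moreover have "x = of_real (cmod x) * sgn x"
    using False by (simp add: sgn_div_norm scaleR_conv_of_real)
  ultimately show ?thesis
    using that by blast
qed

lemma orthogonal_half_pair_param:
  assumes norms: "(cmod x)\<^sup>2 + (cmod y)\<^sup>2 = 1/2" and orth: "Re (x * cnj y) = 0"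
  shows "\<exists>\<beta> w s. 0 \<le> \<beta> \<and> \<beta> \<le> 1 / sqrt 2 \<and> cmod w = 1 \<and> s \<in> {1, -1::real} \<and>
      x = of_real \<beta> * w \<and> y = of_real s * \<i> * of_real (sqrt (1/2 - \<beta>\<^sup>2)) * w"
proof -
  have "x \<noteq> 0 \<or> y \<noteq> 0"
    using norms by auto
  then obtain w where w: "cmod w = 1" "x = of_real (cmod x) * w" "Re (y * cnj w) = 0"
    by (rule orthogonal_pair_phase[OF orth])
  define \<beta> where "\<beta> = cmod x"
  define z where "z = y * cnj w"
  define s :: real where "s = (if 0 \<le> Im z then 1 else -1)"
  have "(cmod y)\<^sup>2 = 1/2 - \<beta>\<^sup>2"
    using norms by (simp add: \<beta>_def)
  then have norm_y: "cmod y = sqrt (1/2 - \<beta>\<^sup>2)" and "\<beta>\<^sup>2 \<le> 1/2"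
    using real_sqrt_unique[of "cmod y"] zero_le_power2[of "cmod y"] by simp_all
  then have "\<beta> \<le> sqrt (1/2)"
    by (intro real_le_rsqrt)
  then have \<beta>_le: "\<beta> \<le> 1 / sqrt 2"
    by (simp add: real_sqrt_divide)
  have "Re z = 0"
    using w by (simp add: z_def)
  moreover have "cmod z = cmod y"
    using w(1) by (simp add: z_def norm_mult)
  ultimately have z: "z = \<i> * of_real (Im z)" and "\<bar>Im z\<bar> = cmod y"
    by (simp_all add: complex_eq_iff cmod_eq_Im)
  then have "Im z = s * sqrt (1/2 - \<beta>\<^sup>2)"
    unfolding norm_y s_def by (auto simp: abs_if)
  then have z_eq: "z = of_real s * \<i> * of_real (sqrt (1/2 - \<beta>\<^sup>2))"
    using z by (simp add: mult_ac)
  have "y = z * w"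
    using cnj_mult_self_unit[OF w(1)] by (simp add: z_def mult.assoc)
  moreover have "0 \<le> \<beta>" "s \<in> {1, -1}" "x = of_real \<beta> * w"
    using w(2) by (simp_all add: \<beta>_def s_def)
  ultimately show ?thesis
    using w(1) \<beta>_le z_eq by blast
qed

lemma orthogonal_half_pair_of_param:
  assumes \<beta>: "0 \<le> \<beta>" "\<beta> \<le> 1 / sqrt 2" and w: "cmod w = 1" and s: "s \<in> {1, -1::real}"
    and x: "x = of_real \<beta> * w" and y: "y = of_real s * \<i> * of_real (sqrt (1/2 - \<beta>\<^sup>2)) * w"
  shows "(cmod x)\<^sup>2 + (cmod y)\<^sup>2 = 1/2" and "Re (x * cnj y) = 0"
proof -
  have "\<beta>\<^sup>2 \<le> (1 / sqrt 2)\<^sup>2"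
    using \<beta> by (intro power_mono)
  then have "\<beta>\<^sup>2 \<le> 1/2"
    by (simp add: power_divide)
  moreover have "\<bar>s\<bar> = 1"
    using s by auto
  ultimately show "(cmod x)\<^sup>2 + (cmod y)\<^sup>2 = 1/2"
    using w \<beta> by (simp add: x y norm_mult power_mult_distrib)
  have "x * cnj y = - \<i> * of_real (\<beta> * s * sqrt (1/2 - \<beta>\<^sup>2)) * (cnj w * w)"
    by (simp add: x y algebra_simps)
  then show "Re (x * cnj y) = 0"
    using cnj_mult_self_unit[OF w] by simp
qed


lemma bell_weight_entries:
  "bell_weight v 1 = (cmod (v $ (0,0) + v $ (1,1)))\<^sup>2 / 2"
  "bell_weight v 2 = (cmod (v $ (0,0) - v $ (1,1)))\<^sup>2 / 2"
  "bell_weight v 3 = (cmod (v $ (0,1) + v $ (1,0)))\<^sup>2 / 2"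
  "bell_weight v 4 = (cmod (v $ (0,1) - v $ (1,0)))\<^sup>2 / 2"
proof -
  have "bell_coeff v 1 = (v $ (0,0) + v $ (1,1)) / of_real (sqrt 2)"
    "bell_coeff v 2 = (v $ (0,0) - v $ (1,1)) / of_real (sqrt 2)"
    "bell_coeff v 3 = (v $ (0,1) + v $ (1,0)) / of_real (sqrt 2)"
    "bell_coeff v 4 = (v $ (0,1) - v $ (1,0)) / of_real (sqrt 2)"
    by (simp_all add: bell_coeff_def braket_def bell_vec_def sum_UNIV_2x2 bell_def field_simps)
  then show "bell_weight v 1 = (cmod (v $ (0,0) + v $ (1,1)))\<^sup>2 / 2"
    "bell_weight v 2 = (cmod (v $ (0,0) - v $ (1,1)))\<^sup>2 / 2"
    "bell_weight v 3 = (cmod (v $ (0,1) + v $ (1,0)))\<^sup>2 / 2"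
    "bell_weight v 4 = (cmod (v $ (0,1) - v $ (1,0)))\<^sup>2 / 2"
    by (simp_all add: bell_weight_def norm_divide power_divide)
qed

lemma cmod_add_squared: "(cmod (x + y))\<^sup>2 = (cmod x)\<^sup>2 + (cmod y)\<^sup>2 + 2 * Re (x * cnj y)"
  and cmod_diff_squared: "(cmod (x - y))\<^sup>2 = (cmod x)\<^sup>2 + (cmod y)\<^sup>2 - 2 * Re (x * cnj y)"
  unfolding cmod_power2 by (simp_all add: power2_eq_square algebra_simps)

lemma uniform_bell_weights_iff_entries:
  "uniform_bell_weights v \<longleftrightarrow>
     ((cmod (v $ (0,0)))\<^sup>2 + (cmod (v $ (1,1)))\<^sup>2 = 1/2 \<and> Re (v $ (0,0) * cnj (v $ (1,1))) = 0) \<and>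
     ((cmod (v $ (0,1)))\<^sup>2 + (cmod (v $ (1,0)))\<^sup>2 = 1/2 \<and> Re (v $ (0,1) * cnj (v $ (1,0))) = 0)"
  unfolding uniform_bell_weights_def forall_4 bell_weight_entries cmod_add_squared cmod_diff_squared
  by auto

lemma vec_eq_scalar_mult_ket:
  "v = c *s ket a00 a01 a10 a11 \<longleftrightarrow>
     v $ (0,0) = c * a00 \<and> v $ (0,1) = c * a01 \<and> v $ (1,0) = c * a10 \<and> v $ (1,1) = c * a11"
  unfolding vec_eq_iff ball_UNIV[symmetric] UNIV_2x2 by (simp add: ket_def)

lemma uniform_bell_weights_if_optimal_form:
  assumes "optimal_form v"
  shows "uniform_bell_weights v"
proof -
  obtain c \<alpha> \<beta> \<phi> s1 s2 where c: "cmod c = 1" and \<alpha>: "0 \<le> \<alpha>" "\<alpha> \<le> 1 / sqrt 2"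
      and \<beta>: "0 \<le> \<beta>" "\<beta> \<le> 1 / sqrt 2" and s: "s1 \<in> {1, -1}" "s2 \<in> {1, -1}"
      and v: "v = c *s ket (of_real \<alpha>) (of_real \<beta> * cis \<phi>)
                   (of_real s1 * \<i> * of_real (sqrt (1/2 - \<beta>\<^sup>2)) * cis \<phi>)
                   (of_real s2 * \<i> * of_real (sqrt (1/2 - \<alpha>\<^sup>2)))"
    using assms unfolding optimal_form_def by blast
  have v00: "v $ (0,0) = of_real \<alpha> * c"
    and v11: "v $ (1,1) = of_real s2 * \<i> * of_real (sqrt (1/2 - \<alpha>\<^sup>2)) * c"
    and v01: "v $ (0,1) = of_real \<beta> * (c * cis \<phi>)"
    and v10: "v $ (1,0) = of_real s1 * \<i> * of_real (sqrt (1/2 - \<beta>\<^sup>2)) * (c * cis \<phi>)"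
    using v unfolding vec_eq_scalar_mult_ket by (simp_all add: mult_ac)
  have "cmod (c * cis \<phi>) = 1"
    using c by (simp add: norm_mult)
  then show "uniform_bell_weights v"
    unfolding uniform_bell_weights_iff_entries
    using orthogonal_half_pair_of_param[OF \<alpha> c s(2) v00 v11] orthogonal_half_pair_of_param[OF \<beta> _ s(1) v01 v10]
    by simp
qed

lemma optimal_form_if_uniform_bell_weights:
  assumes "uniform_bell_weights v"
  shows "optimal_form v"
proof -
  have diag: "(cmod (v $ (0,0)))\<^sup>2 + (cmod (v $ (1,1)))\<^sup>2 = 1/2" "Re (v $ (0,0) * cnj (v $ (1,1))) = 0"
    and antidiag: "(cmod (v $ (0,1)))\<^sup>2 + (cmod (v $ (1,0)))\<^sup>2 = 1/2" "Re (v $ (0,1) * cnj (v $ (1,0))) = 0"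
    using assms unfolding uniform_bell_weights_iff_entries by simp_all
  obtain \<alpha> c s2 where \<alpha>: "0 \<le> \<alpha>" "\<alpha> \<le> 1 / sqrt 2" and c: "cmod c = 1" and s2: "s2 \<in> {1, -1::real}"
    and v00: "v $ (0,0) = of_real \<alpha> * c"
    and v11: "v $ (1,1) = of_real s2 * \<i> * of_real (sqrt (1/2 - \<alpha>\<^sup>2)) * c"
    using orthogonal_half_pair_param[OF diag] by blast
  have cc: "cnj c * c = 1"
    using cnj_mult_self_unit[OF c] .
  have "(cmod (v $ (0,1) * cnj c))\<^sup>2 + (cmod (v $ (1,0) * cnj c))\<^sup>2 = 1/2"
    using antidiag(1) c by (simp add: norm_mult)
  moreover have "Re (v $ (0,1) * cnj c * cnj (v $ (1,0) * cnj c)) = 0"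
    using antidiag(2) cc by (simp add: mult_ac)
  ultimately obtain \<beta> w s1 where \<beta>: "0 \<le> \<beta>" "\<beta> \<le> 1 / sqrt 2" and w: "cmod w = 1" and s1: "s1 \<in> {1, -1::real}"
    and v01: "v $ (0,1) * cnj c = of_real \<beta> * w"
    and v10: "v $ (1,0) * cnj c = of_real s1 * \<i> * of_real (sqrt (1/2 - \<beta>\<^sup>2)) * w"
    using orthogonal_half_pair_param by blast
  have "z = c * (z * cnj c)" for z
    using cc by (simp add: mult_ac)
  then have "v $ (0,1) = c * (of_real \<beta> * w)"
    and "v $ (1,0) = c * (of_real s1 * \<i> * of_real (sqrt (1/2 - \<beta>\<^sup>2)) * w)"
    unfolding v01[symmetric] v10[symmetric] by blast+
  then have "v = c *s ket (of_real \<alpha>) (of_real \<beta> * cis (Arg2pi w))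
                   (of_real s1 * \<i> * of_real (sqrt (1/2 - \<beta>\<^sup>2)) * cis (Arg2pi w))
                   (of_real s2 * \<i> * of_real (sqrt (1/2 - \<alpha>\<^sup>2)))"
    unfolding vec_eq_scalar_mult_ket unit_complex_eq_cis_Arg2pi[OF w, symmetric]
    using v00 v11 by (simp add: mult.commute)
  then show "optimal_form v"
    unfolding optimal_form_def using \<alpha> \<beta> c s1 s2 Arg2pi[of w] by blast
qed

lemma optimal_form_iff_uniform_bell_weights: "optimal_form v \<longleftrightarrow> uniform_bell_weights v"
  using uniform_bell_weights_if_optimal_form optimal_form_if_uniform_bell_weights by blast

lemma optimal_values_if_uniform_bell_weights:
  assumes "normalized v" "uniform_bell_weights v"
  shows "precision v lam = 3/4" "sloppiness v lam = 1/64"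
  using assms precision_eq_iff sloppiness_eq_iff by blast+

lemma normalized_ket_iff:
  "normalized (ket a00 a01 a10 a11) \<longleftrightarrow> (cmod a00)\<^sup>2 + (cmod a01)\<^sup>2 + (cmod a10)\<^sup>2 + (cmod a11)\<^sup>2 = 1"
proof -
  have "braket (ket a00 a01 a10 a11) (ket a00 a01 a10 a11)
      = of_real ((cmod a00)\<^sup>2 + (cmod a01)\<^sup>2 + (cmod a10)\<^sup>2 + (cmod a11)\<^sup>2)"
    unfolding braket_def sum_UNIV_2x2 of_real_add complex_norm_square by (simp add: ket_def mult.commute)
  then show ?thesis
    unfolding normalized_def by (metis of_real_eq_1_iff)
qed

lemma
  fixes \<phi> :: real
  defines "v \<equiv> ket (1 / sqrt 2) (cis \<phi> / sqrt 2) 0 0"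
  shows normalized_product_probe: "normalized v"
    and concurrence_product_probe: "concurrence v = 0"
    and uniform_bell_weights_product_probe: "uniform_bell_weights v"
proof -
  have "(cmod (1 / of_real (sqrt 2)))\<^sup>2 = 1/2" "(cmod (cis \<phi> / of_real (sqrt 2)))\<^sup>2 = 1/2"
    by (simp_all add: norm_divide power_divide)
  then show "normalized v" "concurrence v = 0" "uniform_bell_weights v"
    unfolding v_def normalized_ket_iff uniform_bell_weights_iff_entries concurrence_def
    by (simp_all add: ket_def)
qed

lemma
  fixes \<theta> :: real
  defines "v \<equiv> ket (cos \<theta> / sqrt 2) (cos \<theta> / sqrt 2) (- \<i> * sin \<theta> / sqrt 2) (\<i> * sin \<theta> / sqrt 2)"
  shows normalized_rotated_probe: "normalized v"
    and concurrence_rotated_probe: "concurrence v = \<bar>sin (2 * \<theta>)\<bar>"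
    and uniform_bell_weights_rotated_probe: "uniform_bell_weights v"
proof -
  show "normalized v"
    unfolding v_def normalized_ket_iff using sin_cos_squared_add[of \<theta>]
    by (simp add: norm_divide norm_mult power_divide)
  show "uniform_bell_weights v"
    unfolding v_def uniform_bell_weights_iff_entries using sin_cos_squared_add[of \<theta>]
    by (simp add: ket_def norm_divide norm_mult power_divide)
  have "v $ (0,0) * v $ (1,1) - v $ (0,1) * v $ (1,0) = \<i> * of_real (sin \<theta> * cos \<theta>)"
    by (simp add: v_def ket_def field_simps flip: of_real_mult)
  then show "concurrence v = \<bar>sin (2 * \<theta>)\<bar>"
    by (simp add: concurrence_def norm_mult sin_double abs_mult)
qed

lemma exists_optimal_probe_with_concurrence:
  fixes C :: real
  assumes "0 \<le> C" "C \<le> 1"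
  obtains v where "normalized v" "concurrence v = C" "uniform_bell_weights v"
proof -
  have "\<bar>sin (2 * (arcsin C / 2))\<bar> = C"
    using assms by (simp add: sin_arcsin)
  then show ?thesis
    using that normalized_rotated_probe concurrence_rotated_probe uniform_bell_weights_rotated_probe
    by metis
qed

theorem mainTheorem3:
  shows "(\<forall>psi0 lam. normalized psi0 \<longrightarrow>
            precision psi0 lam \<ge> 3/4 \<and> sloppiness psi0 lam \<ge> 1/64 \<and> det (QFI psi0 lam) \<le> 64)
       \<and> (\<forall>psi0 lam. normalized psi0 \<longrightarrow>
            (precision psi0 lam = 3/4 \<longleftrightarrow> sloppiness psi0 lam = 1/64)
          \<and> (sloppiness psi0 lam = 1/64 \<longleftrightarrow> optimal_form psi0))
       \<and> (\<forall>\<phi> lam. let v = ket (1 / sqrt 2) (cis \<phi> / sqrt 2) 0 0 in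
            normalized v \<and> concurrence v = 0 \<and> precision v lam = 3/4 \<and> sloppiness v lam = 1/64)
       \<and> (\<forall>C. 0 \<le> C \<and> C \<le> 1 \<longrightarrow> (\<exists>v. normalized v \<and> concurrence v = C \<and>
            (\<forall>lam. precision v lam = 3/4 \<and> sloppiness v lam = 1/64)))"
proof (intro conjI allI impI)
  fix psi0 lam
  assume psi0: "normalized psi0"
  show "precision psi0 lam \<ge> 3/4" "sloppiness psi0 lam \<ge> 1/64" "det (QFI psi0 lam) \<le> 64"
    using precision_ge[OF psi0] sloppiness_ge[OF psi0] det_QFI_le[OF psi0] .
  show "precision psi0 lam = 3/4 \<longleftrightarrow> sloppiness psi0 lam = 1/64"
    and "sloppiness psi0 lam = 1/64 \<longleftrightarrow> optimal_form psi0"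
    unfolding precision_eq_iff[OF psi0] sloppiness_eq_iff[OF psi0] optimal_form_iff_uniform_bell_weights
    by simp_all
next
  fix \<phi> lam
  show "let v = ket (1 / sqrt 2) (cis \<phi> / sqrt 2) 0 0 in
      normalized v \<and> concurrence v = 0 \<and> precision v lam = 3/4 \<and> sloppiness v lam = 1/64"
    using normalized_product_probe concurrence_product_probe uniform_bell_weights_product_probe
      optimal_values_if_uniform_bell_weights[OF normalized_product_probe]
    by (simp only: Let_def)
next
  fix C :: real
  assume "0 \<le> C \<and> C \<le> 1"
  then obtain v where "normalized v" "concurrence v = C" "uniform_bell_weights v"
    using exists_optimal_probe_with_concurrence by blast
  then show "\<exists>v. normalized v \<and> concurrence v = C \<and> (\<forall>lam. precision v lam = 3/4 \<and> sloppiness v lam = 1/64)"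
    using optimal_values_if_uniform_bell_weights by blast
qed

end
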